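(* Let $A$ be a real $2\times 2$ matrix and $B$ a real $1\times 2$ matrix, and let $\mathrm{NT}=\{\vec{x}\in\mathbb{R}^2 : BA^k\vec{x}>0 \text{ for all integers } k\ge 0\}$. Suppose $A$ has two eigenvalues $\lambda_1>\lambda_2>0$ with eigenvectors $\vec{\beta}_1,\vec{\beta}_2$ respectively, such that $B\vec{\beta}_1>0$ and $B\vec{\beta}_2>0$. If $\vec{\alpha}\in\mathbb{R}^2$ satisfies $B\vec{\alpha}=0$ and $BA\vec{\alpha}>0$, then $\mathrm{NT}=\{k_1\vec{\alpha}+k_2\vec{\beta}_2 : k_1\ge 0,\ k_2>0\}$.
   Context: $\mathrm{NT}$ is the non-termination set of the loop "while $(B\vec{x}>0)$ $\{\vec{x}:=A\vec{x}\}$". *)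

theory Defs
  imports "HOL-Analysis.Analysis"
begin

text \<open>Non-termination set of the loop  while (B x > 0) { x := A x }  for a real 2x2 matrix A
  and a real 1x2 matrix B:  NT = { x . B A^k x > 0 (A^k x written as k-fold iteration of x |-> A x) for all k >= 0 }.\<close>
definition NT :: "real^2^2 \<Rightarrow> real^2^1 \<Rightarrow> (real^2) set" where
  "NT A B = {x. \<forall>k::nat. (B *v (((\<lambda>y. A *v y) ^^ k) x)) $ 1 > 0}"

end

theory Submission
  imports Defs
begin

(* Since l1 <> l2, the eigenvectors form a basis of R^2, so every x is c1 beta1 + c2 beta2
   and B A^k x = c1 l1^k p + c2 l2^k q with p = B beta1 > 0, q = B beta2 > 0.  Such a sum of
   two exponentials stays positive for all k iff c1 p >= 0 and c1 p + c2 q > 0 (the faster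
   exponential must not be negative, and k = 0 must be positive).  Hence NT is the cone
   {c1 beta1 + c2 beta2 | c1 >= 0, c1 p + c2 q > 0}.  Writing alpha = a beta1 + b beta2,
   the hypotheses B alpha = 0 and B A alpha > 0 give a p + b q = 0 and a > 0, and a change
   of generators turns this cone into {k1 alpha + k2 beta2 | k1 >= 0, k2 > 0}. *)

lemma iterate_eigen_combination:
  fixes A :: "real^'n^'n"
  assumes "A *v b1 = l1 *\<^sub>R b1" "A *v b2 = l2 *\<^sub>R b2"
  shows "((\<lambda>y. A *v y) ^^ k) (c1 *\<^sub>R b1 + c2 *\<^sub>R b2)
       = (c1 * l1^k) *\<^sub>R b1 + (c2 * l2^k) *\<^sub>R b2"
proof (induction k)
  case 0
  show ?case by simp
next
  case (Suc k)
  then show ?case using assms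
    by (simp add: matrix_vector_right_distrib matrix_vector_mult_scaleR algebra_simps)
qed

lemma guard_iterate_eigen_combination:
  fixes A :: "real^'n^'n" and B :: "real^'n^'m"
  assumes "A *v b1 = l1 *\<^sub>R b1" "A *v b2 = l2 *\<^sub>R b2"
  shows "(B *v ((\<lambda>y. A *v y) ^^ k) (c1 *\<^sub>R b1 + c2 *\<^sub>R b2)) $ i
       = c1 * l1^k * (B *v b1) $ i + c2 * l2^k * (B *v b2) $ i"
  by (simp add: iterate_eigen_combination[OF assms]
      matrix_vector_right_distrib matrix_vector_mult_scaleR)

lemma eigenvector_not_multiple:
  fixes A :: "real^'n^'n"
  assumes "b2 \<noteq> 0" "A *v b1 = l1 *\<^sub>R b1" "A *v b2 = l2 *\<^sub>R b2" "l1 \<noteq> l2"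
  shows "b2 \<notin> span {b1}"
proof
  assume "b2 \<in> span {b1}"
  then obtain t where t: "b2 = t *\<^sub>R b1" by (auto simp: span_singleton)
  have "A *v b2 = l1 *\<^sub>R b2"
    using assms(2) t by (simp add: matrix_vector_mult_scaleR)
  then show False using assms(1,3,4) by simp
qed

lemma eigenvectors_span_plane:
  fixes A :: "real^2^2" and b1 b2 :: "real^2"
  assumes "b1 \<noteq> 0" "b2 \<noteq> 0" "A *v b1 = l1 *\<^sub>R b1" "A *v b2 = l2 *\<^sub>R b2" "l1 \<noteq> l2"
  obtains c1 c2 where "x = c1 *\<^sub>R b1 + c2 *\<^sub>R b2"
proof -
  have notin: "b2 \<notin> span {b1}"
    using eigenvector_not_multiple[OF assms(2-5)] .
  then have "independent {b2, b1}"
    using assms(1) by (simp add: independent_insert span_base)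
  moreover have "b2 \<noteq> b1" using notin span_base by blast
  ultimately have "UNIV \<subseteq> span {b2, b1}"
    using card_eq_dim[of "{b2, b1}" UNIV] by simp
  then obtain c2 where "x - c2 *\<^sub>R b2 \<in> span {b1}"
    using span_breakdown_eq by blast
  then obtain c1 where "x - c2 *\<^sub>R b2 = c1 *\<^sub>R b1" by (auto simp: span_singleton)
  then show ?thesis by (intro that[of c1 c2]) (simp add: algebra_simps)
qed

lemma pos_two_exponentials_iff:
  fixes u v l1 l2 :: real
  assumes "l1 > l2" "l2 > 0"
  shows "(\<forall>k::nat. u * l1^k + v * l2^k > 0) \<longleftrightarrow> u \<ge> 0 \<and> u + v > 0"
proof
  assume all: "\<forall>k::nat. u * l1^k + v * l2^k > 0"
  have "u \<ge> 0"
  proof (rule ccontr)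
    assume "\<not> u \<ge> 0"
    then have neg: "- u > 0" by simp
    have "1 < l1 / l2" using assms by simp
    then obtain n where n: "v / (- u) < (l1 / l2)^n" using real_arch_pow by blast
    then have "v * l2^n < - u * l1^n"
      using neg assms(2) by (simp add: pos_divide_less_eq power_divide field_simps)
    then show False using all[rule_format, of n] by linarith
  qed
  then show "u \<ge> 0 \<and> u + v > 0" using all[rule_format, of 0] by simp
next
  assume h: "u \<ge> 0 \<and> u + v > 0"
  show "\<forall>k::nat. u * l1^k + v * l2^k > 0"
  proof
    fix k :: nat
    have "u * l2^k \<le> u * l1^k"
      using h assms by (simp add: mult_left_mono power_mono)
    moreover have "(u + v) * l2^k > 0" using h assms(2) by simp
    ultimately show "u * l1^k + v * l2^k > 0" by (simp add: algebra_simps)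
  qed
qed

lemma NT_member_eigen_coordinates:
  fixes A :: "real^2^2" and B :: "real^2^1"
  assumes "l1 > l2" "l2 > 0" "A *v b1 = l1 *\<^sub>R b1" "A *v b2 = l2 *\<^sub>R b2"
    and "p = (B *v b1) $ 1" "q = (B *v b2) $ 1"
  shows "c1 *\<^sub>R b1 + c2 *\<^sub>R b2 \<in> NT A B \<longleftrightarrow> c1 * p \<ge> 0 \<and> c1 * p + c2 * q > 0"
proof -
  have "(B *v ((\<lambda>y. A *v y) ^^ k) (c1 *\<^sub>R b1 + c2 *\<^sub>R b2)) $ 1
      = (c1 * p) * l1^k + (c2 * q) * l2^k" for k
    using guard_iterate_eigen_combination[OF assms(3,4), of B k c1 c2 1] assms(5,6)
    by (simp add: algebra_simps)
  then have "c1 *\<^sub>R b1 + c2 *\<^sub>R b2 \<in> NT A B \<longleftrightarrow> (\<forall>k::nat. (c1 * p) * l1^k + (c2 * q) * l2^k > 0)"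
    unfolding NT_def by simp
  also have "\<dots> \<longleftrightarrow> c1 * p \<ge> 0 \<and> c1 * p + c2 * q > 0"
    using pos_two_exponentials_iff[OF assms(1,2)] by blast
  finally show ?thesis .
qed

lemma NT_eigen_cone:
  fixes A :: "real^2^2" and B :: "real^2^1"
  assumes "l1 > l2" "l2 > 0"
    and "b1 \<noteq> 0" "A *v b1 = l1 *\<^sub>R b1" "b2 \<noteq> 0" "A *v b2 = l2 *\<^sub>R b2"
    and "p > 0" "p = (B *v b1) $ 1" "q = (B *v b2) $ 1"
  shows "NT A B = {c1 *\<^sub>R b1 + c2 *\<^sub>R b2 | c1 c2. c1 \<ge> 0 \<and> c1 * p + c2 * q > 0}"
proof (intro set_eqI iffI)
  fix x assume "x \<in> NT A B"
  obtain c1 c2 where x: "x = c1 *\<^sub>R b1 + c2 *\<^sub>R b2"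
    using eigenvectors_span_plane[OF assms(3,5,4,6)] assms(1) by blast
  have "c1 * p \<ge> 0 \<and> c1 * p + c2 * q > 0"
    using NT_member_eigen_coordinates[OF assms(1,2,4,6,8,9)] \<open>x \<in> NT A B\<close> x by blast
  moreover have "c1 \<ge> 0" if "c1 * p \<ge> 0"
    using that assms(7) by (simp add: zero_le_mult_iff)
  ultimately show "x \<in> {c1 *\<^sub>R b1 + c2 *\<^sub>R b2 | c1 c2. c1 \<ge> 0 \<and> c1 * p + c2 * q > 0}"
    using x by blast
next
  fix x assume "x \<in> {c1 *\<^sub>R b1 + c2 *\<^sub>R b2 | c1 c2. c1 \<ge> 0 \<and> c1 * p + c2 * q > 0}"
  then show "x \<in> NT A B"
    using NT_member_eigen_coordinates[OF assms(1,2,4,6,8,9)] assms(7) by auto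
qed

(* If B alpha = 0 and B A alpha > 0, the beta1-coordinate of alpha is positive: from
   a p + b q = 0 and a l1 p + b l2 q > 0 one gets a p (l1 - l2) > 0. *)
lemma dominant_coordinate_pos:
  fixes a b p q l1 l2 :: real
  assumes "l1 > l2" "p > 0" "a * p + b * q = 0" "a * l1 * p + b * l2 * q > 0"
  shows "a > 0"
proof -
  have "b * q = - a * p" using assms(3) by linarith
  then have "b * l2 * q = - a * p * l2" by (metis mult.commute mult.left_commute)
  then have "a * p * (l1 - l2) > 0" using assms(4) by (simp add: algebra_simps)
  then show ?thesis using assms(1,2) by (simp add: zero_less_mult_iff)
qed

lemma cone_change_of_generators:
  fixes b1 b2 alpha :: "'a::real_vector" and a b p q :: real
  assumes "alpha = a *\<^sub>R b1 + b *\<^sub>R b2" "a > 0" "q > 0" "a * p + b * q = 0"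
  shows "{c1 *\<^sub>R b1 + c2 *\<^sub>R b2 | c1 c2. c1 \<ge> 0 \<and> c1 * p + c2 * q > 0}
       = {k1 *\<^sub>R alpha + k2 *\<^sub>R b2 | k1 k2. k1 \<ge> 0 \<and> k2 > 0}"
proof (intro set_eqI iffI)
  fix x assume "x \<in> {c1 *\<^sub>R b1 + c2 *\<^sub>R b2 | c1 c2. c1 \<ge> 0 \<and> c1 * p + c2 * q > 0}"
  then obtain c1 c2 where c: "c1 \<ge> 0" "c1 * p + c2 * q > 0" and x: "x = c1 *\<^sub>R b1 + c2 *\<^sub>R b2"
    by blast
  define k1 where "k1 = c1 / a"
  define k2 where "k2 = (c1 * p + c2 * q) / q"
  have b: "b = - a * p / q" using assms(3,4) by (simp add: field_simps)
  have "k1 * b + k2 = c2" using assms(2,3) by (simp add: k1_def k2_def b field_simps)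
  moreover have "k1 * a = c1" using assms(2) by (simp add: k1_def)
  ultimately have "x = (k1 * a) *\<^sub>R b1 + (k1 * b + k2) *\<^sub>R b2" by (simp add: x)
  also have "\<dots> = k1 *\<^sub>R alpha + k2 *\<^sub>R b2" by (simp add: assms(1) algebra_simps)
  finally have "x = k1 *\<^sub>R alpha + k2 *\<^sub>R b2" .
  moreover have "k1 \<ge> 0" "k2 > 0" using c assms(2,3) by (auto simp: k1_def k2_def)
  ultimately show "x \<in> {k1 *\<^sub>R alpha + k2 *\<^sub>R b2 | k1 k2. k1 \<ge> 0 \<and> k2 > 0}" by blast
next
  fix x assume "x \<in> {k1 *\<^sub>R alpha + k2 *\<^sub>R b2 | k1 k2. k1 \<ge> 0 \<and> k2 > 0}"
  then obtain k1 k2 where k: "k1 \<ge> 0" "k2 > 0" and x: "x = k1 *\<^sub>R alpha + k2 *\<^sub>R b2"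
    by blast
  have "x = (k1 * a) *\<^sub>R b1 + (k1 * b + k2) *\<^sub>R b2"
    unfolding x assms(1) by (simp add: algebra_simps)
  moreover have "(k1 * a) * p + (k1 * b + k2) * q = k1 * (a * p + b * q) + k2 * q"
    by (simp add: algebra_simps)
  then have "(k1 * a) * p + (k1 * b + k2) * q > 0" using assms(3,4) k by simp
  moreover have "k1 * a \<ge> 0" using k assms(2) by simp
  ultimately show "x \<in> {c1 *\<^sub>R b1 + c2 *\<^sub>R b2 | c1 c2. c1 \<ge> 0 \<and> c1 * p + c2 * q > 0}"
    by blast
qed

theorem lemma7:
  fixes A :: "real^2^2" and B :: "real^2^1"
    and l1 l2 :: real and beta1 beta2 alpha :: "real^2"
  assumes "l1 > l2" and "l2 > 0"
    and "beta1 \<noteq> 0" and "A *v beta1 = l1 *\<^sub>R beta1"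
    and "beta2 \<noteq> 0" and "A *v beta2 = l2 *\<^sub>R beta2"
    and "(B *v beta1) $ 1 > 0" and "(B *v beta2) $ 1 > 0"
    and "(B *v alpha) $ 1 = 0" and "(B *v (A *v alpha)) $ 1 > 0"
  shows "NT A B = {k1 *\<^sub>R alpha + k2 *\<^sub>R beta2 | k1 k2. k1 \<ge> 0 \<and> k2 > 0}"
proof -
  define p where "p = (B *v beta1) $ 1"
  define q where "q = (B *v beta2) $ 1"
  note basis = eigenvectors_span_plane[OF assms(3,5,4,6)]
  note guard = guard_iterate_eigen_combination[OF assms(4,6), where B = B and i = 1, folded p_def q_def]
  obtain a b where ab: "alpha = a *\<^sub>R beta1 + b *\<^sub>R beta2"
    using basis assms(1) by blast
  have balance: "a * p + b * q = 0" using guard[where k = 0] assms(9) ab by simp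
  have "a * l1 * p + b * l2 * q > 0" using guard[where k = 1] assms(10) ab by simp
  then have "a > 0" using dominant_coordinate_pos assms(1,7) balance p_def by blast
  have "NT A B = {c1 *\<^sub>R beta1 + c2 *\<^sub>R beta2 | c1 c2. c1 \<ge> 0 \<and> c1 * p + c2 * q > 0}"
    using NT_eigen_cone[OF assms(1-6)] assms(7) p_def q_def by blast
  also have "\<dots> = {k1 *\<^sub>R alpha + k2 *\<^sub>R beta2 | k1 k2. k1 \<ge> 0 \<and> k2 > 0}"
    using cone_change_of_generators[OF ab \<open>a > 0\<close> _ balance] assms(8) q_def by blast
  finally show ?thesis .
qed

end
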